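(* Consider the numerator parameters $\frac{v^{(i)}_r+\sigma}{\ell_r}$ ($r=1,\dots,m$, $\sigma=0,\dots,\ell_r-1$) and denominator parameters $\frac{t}{\ell_0}$ ($t=1,\dots,\ell_0$) of the series $F^{(\mathbf b_i)}_{\mathbf b_i}(\lambda)=\sum_{s\ge0}\frac{\prod_r\prod_\sigma((v^{(i)}_r+\sigma)/\ell_r)_s}{\prod_{t=1}^{\ell_0}(t/\ell_0)_s}\lambda^{s\ell_0}$. (a) If $\mathbf b_i$ is an interior point of $P(A)$, then exactly $\ell_0-R_k$ factors appear in both numerator and denominator, namely $\{(1-s_0^{(j)}/\ell_0)_s:\mathbf b_j\in\mathcal B_k\text{ a boundary point of }P(A)\}$. (b) If $\mathbf b_i$ is a boundary point of $P(A)$, then exactly $\ell_0-R_k-1$ factors appear in both numerator and denominator, namely $\{(1-s_0^{(j)}/\ell_0)_s:\mathbf b_j\in\mathcal B_k\text{ a boundary point of }P(A),\ \mathbf b_j\neq\mathbf b_i\}$.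
   Context: Let $A=\{\mathbf a_1,\dots,\mathbf a_m\}\subseteq\mathbb Z^n$ be linearly independent over $\mathbb R$, $\mathbf a_0\in\mathbb Z^n$, and $\ell_0,\dots,\ell_m$ positive integers with gcd $1$, $\ell_0\mathbf a_0=\sum_{j=1}^m\ell_j\mathbf a_j$, $\ell_0=\sum_{j=1}^m\ell_j$. Let $\mathbb ZA$, $\mathbb ZA_+$ be the groups generated by $A$ and $A\cup\{\mathbf a_0\}$. Let $V$ be the real span of $A$, $V_{\mathbb Z}=V\cap\mathbb Z^n$, $P(A)=\{\sum_jc_j\mathbf a_j:0\le c_j<1\}$, $\mathcal B=V_{\mathbb Z}\cap P(A)$. Each $\mathbf b\in\mathcal B$ is written uniquely $\sum_rv_r\mathbf a_r$ with $v_r\in[0,1)$; $\mathbf b$ is an interior point of $P(A)$ if all $v_r>0$ and a boundary point otherwise. Fix a coset $\mathcal C_k$ of $\mathbb ZA_+$ in $V_{\mathbb Z}$, $\mathcal B_k=\mathcal B\cap\mathcal C_k$ (which has $\ell_0$ elements), and let $R_k$ be the number of interior points of $P(A)$ in $\mathcal B_k$. Fix $\mathbf b_i=\sum_rv^{(i)}_r\mathbf a_r\in\mathcal B_k$. For $\mathbf b_j\in\mathcal B_k$ let $s_0^{(j)}\in\{0,\dots,\ell_0-1\}$ be the unique element with $\mathbf b_i+s_0^{(j)}\mathbf a_0\equiv\mathbf b_j\pmod{\mathbb ZA}$. Pochhammer: $(a)_s=a(a+1)\cdots(a+s-1)$. *)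

theory Defs
  imports "HOL-Analysis.Analysis" "HOL-Library.Multiset"
begin

text \<open>Vectors of Z^n are modelled as real vectors (real^'n) with integer coordinates.
  The family a is indexed by nat: a 0 is the extra vector a_0 and a 1, ..., a m are the elements of A.\<close>

definition intv :: "real^'n \<Rightarrow> bool" where
  "intv x \<longleftrightarrow> (\<forall>i. x $ i \<in> \<int>)"

text \<open>Integer lattice generated by a j, j in I.  ZA = lat a {1..m}, ZA_+ = lat a {0..m}.\<close>
definition lat :: "(nat \<Rightarrow> real^'n) \<Rightarrow> nat set \<Rightarrow> (real^'n) set" where
  "lat a I = {x. \<exists>c::nat \<Rightarrow> int. x = (\<Sum>j\<in>I. of_int (c j) *\<^sub>R a j)}"

definition VZ :: "(nat \<Rightarrow> real^'n) \<Rightarrow> nat \<Rightarrow> (real^'n) set" where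
  "VZ a m = {x \<in> span (a ` {1..m}). intv x}"

definition pcoord :: "(nat \<Rightarrow> real^'n) \<Rightarrow> nat \<Rightarrow> real^'n \<Rightarrow> (nat \<Rightarrow> real) \<Rightarrow> bool" where
  "pcoord a m b v \<longleftrightarrow> b = (\<Sum>r\<in>{1..m}. v r *\<^sub>R a r) \<and> (\<forall>r\<in>{1..m}. 0 \<le> v r \<and> v r < 1)"

definition PA :: "(nat \<Rightarrow> real^'n) \<Rightarrow> nat \<Rightarrow> (real^'n) set" where
  "PA a m = {b. \<exists>v. pcoord a m b v}"

definition Bset :: "(nat \<Rightarrow> real^'n) \<Rightarrow> nat \<Rightarrow> (real^'n) set" where
  "Bset a m = VZ a m \<inter> PA a m"

definition interior_pt :: "(nat \<Rightarrow> real^'n) \<Rightarrow> nat \<Rightarrow> real^'n \<Rightarrow> bool" where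
  "interior_pt a m b \<longleftrightarrow> (\<exists>v. pcoord a m b v \<and> (\<forall>r\<in>{1..m}. 0 < v r))"

definition boundary_pt :: "(nat \<Rightarrow> real^'n) \<Rightarrow> nat \<Rightarrow> real^'n \<Rightarrow> bool" where
  "boundary_pt a m b \<longleftrightarrow> (\<exists>v. pcoord a m b v \<and> (\<exists>r\<in>{1..m}. v r = 0))"

definition coset_ZAplus :: "(nat \<Rightarrow> real^'n) \<Rightarrow> nat \<Rightarrow> real^'n \<Rightarrow> (real^'n) set" where
  "coset_ZAplus a m c = {x \<in> VZ a m. x - c \<in> lat a {0..m}}"

definition Bk :: "(nat \<Rightarrow> real^'n) \<Rightarrow> nat \<Rightarrow> real^'n \<Rightarrow> (real^'n) set" where
  "Bk a m c = Bset a m \<inter> coset_ZAplus a m c"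

definition Rk :: "(nat \<Rightarrow> real^'n) \<Rightarrow> nat \<Rightarrow> real^'n \<Rightarrow> nat" where
  "Rk a m c = card {b \<in> Bk a m c. interior_pt a m b}"

definition s0 :: "(nat \<Rightarrow> real^'n) \<Rightarrow> nat \<Rightarrow> nat \<Rightarrow> real^'n \<Rightarrow> real^'n \<Rightarrow> nat" where
  "s0 a m l0 bi bj = (THE s. s < l0 \<and> bi + real s *\<^sub>R a 0 - bj \<in> lat a {1..m})"

definition num_params :: "nat \<Rightarrow> (nat \<Rightarrow> nat) \<Rightarrow> (nat \<Rightarrow> real) \<Rightarrow> real multiset" where
  "num_params m l v = (\<Sum>r\<in>{1..m}. mset (map (\<lambda>\<sigma>. (v r + real \<sigma>) / real (l r)) [0..<l r]))"

definition den_params :: "(nat \<Rightarrow> nat) \<Rightarrow> real multiset" where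
  "den_params l = mset (map (\<lambda>t. real t / real (l 0)) [1..<l 0 + 1])"

end

theory Submission
  imports Defs
begin

(* Let v be the coordinates of b_i. Because l_0 a_0 = sum_r l_r a_r with gcd l = 1, the class
   of a_0 has order exactly l_0 modulo ZA. Hence B_k consists of the l_0 distinct points b_s,
   0 <= s < l_0, with coordinates frac (v_r + s l_r / l_0), and s_0(b_s) = s. A numerator
   parameter (v_r + sigma) / l_r equals a denominator parameter t / l_0 exactly when
   t = l_0 - s with 0 < s < l_0 and v_r + s l_r / l_0 an integer, i.e. exactly when b_s is a
   boundary point other than b_i. The denominator parameters are distinct, so the multiset
   intersection is the set of these values 1 - s / l_0. *)

lemma independent_image_coeffs_unique:
  fixes a :: "'i \<Rightarrow> 'a::real_vector"
  assumes "finite I" and "inj_on a I" and "independent (a ` I)"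
    and "(\<Sum>i\<in>I. u i *\<^sub>R a i) = (\<Sum>i\<in>I. w i *\<^sub>R a i)" and "i \<in> I"
  shows "u i = w i"
proof -
  define d where "d x = u (inv_into I a x) - w (inv_into I a x)" for x
  have "(\<Sum>x\<in>a ` I. d x *\<^sub>R x) = (\<Sum>i\<in>I. (u i - w i) *\<^sub>R a i)"
    using assms(2) by (simp add: sum.reindex d_def)
  also have "\<dots> = 0"
    using assms(4) by (simp add: scaleR_diff_left sum_subtractf)
  finally have "d (a i) = 0"
    using assms(1,3,5) by (auto simp: dependent_finite)
  then show ?thesis
    using assms(2,5) by (simp add: d_def)
qed

lemma int_dvd_if_dvd_mult_Gcd_eq_1:
  fixes x :: int and l :: "'i \<Rightarrow> nat"
  assumes "\<And>j. j \<in> S \<Longrightarrow> d dvd x * int (l j)" and "Gcd (l ` S) = 1"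
  shows "d dvd x"
proof -
  have "d dvd Gcd ((*) x ` (int ` l ` S))"
    using assms(1) by (auto intro: Gcd_greatest)
  also have "\<dots> = normalize (x * Gcd (int ` l ` S))"
    by (rule Gcd_mult)
  also have "Gcd (int ` l ` S) = 1"
    using Gcd_int_eq[of "l ` S"] assms(2) by simp
  finally show ?thesis by simp
qed

lemma inter_mset_eq_mset_set:
  assumes "\<forall>x. count B x \<le> 1"
  shows "A \<inter># B = mset_set (set_mset A \<inter> set_mset B)"
proof (rule multiset_eqI)
  fix x
  show "count (A \<inter># B) x = count (mset_set (set_mset A \<inter> set_mset B)) x"
    using assms[rule_format, of x] by (auto simp: count_mset_set' min_def simp flip: count_greater_zero_iff)
qed

lemma lat_diff:
  assumes "x \<in> lat a I" and "y \<in> lat a I"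
  shows "x - y \<in> lat a I"
proof -
  obtain c d where "x = (\<Sum>j\<in>I. of_int (c j) *\<^sub>R a j)" and "y = (\<Sum>j\<in>I. of_int (d j) *\<^sub>R a j)"
    using assms unfolding lat_def by blast
  then have "x - y = (\<Sum>j\<in>I. of_int (c j - d j) *\<^sub>R a j)"
    by (simp add: sum_subtractf scaleR_diff_left)
  then show ?thesis
    unfolding lat_def by (intro CollectI exI[where x="\<lambda>j. c j - d j"])
qed

lemma lat_insert:
  assumes "finite I" and "i \<notin> I"
  shows "x \<in> lat a (insert i I) \<longleftrightarrow> (\<exists>k. x - of_int k *\<^sub>R a i \<in> lat a I)"
proof
  assume "x \<in> lat a (insert i I)"
  then obtain c where "x = (\<Sum>j\<in>insert i I. of_int (c j) *\<^sub>R a j)"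
    by (auto simp: lat_def)
  then have "x - of_int (c i) *\<^sub>R a i = (\<Sum>j\<in>I. of_int (c j) *\<^sub>R a j)"
    using assms by simp
  then show "\<exists>k. x - of_int k *\<^sub>R a i \<in> lat a I"
    unfolding lat_def by blast
next
  assume "\<exists>k. x - of_int k *\<^sub>R a i \<in> lat a I"
  then obtain k c where c: "x - of_int k *\<^sub>R a i = (\<Sum>j\<in>I. of_int (c j) *\<^sub>R a j)"
    by (auto simp: lat_def)
  have "(\<Sum>j\<in>I. of_int ((c(i := k)) j) *\<^sub>R a j) = (\<Sum>j\<in>I. of_int (c j) *\<^sub>R a j)"
    using assms(2) by (intro sum.cong) auto
  then have "x = (\<Sum>j\<in>insert i I. of_int ((c(i := k)) j) *\<^sub>R a j)"
    using assms c by (simp add: algebra_simps)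
  then show "x \<in> lat a (insert i I)"
    unfolding lat_def by blast
qed

lemma lat_atLeastAtMost_0:
  "x \<in> lat a {0..m} \<longleftrightarrow> (\<exists>k. x - of_int k *\<^sub>R a 0 \<in> lat a {1..m})"
proof -
  have "{0..m} = insert 0 {1..m}"
    by auto
  then show ?thesis
    by (simp add: lat_insert)
qed

lemma intv_lat:
  assumes "\<forall>j\<in>I. intv (a j)" and "x \<in> lat a I"
  shows "intv x"
  using assms unfolding intv_def lat_def
  by (auto intro!: Ints_sum Ints_mult)

lemma set_mset_num_params:
  "set_mset (num_params m l v) = (\<Union>r\<in>{1..m}. (\<lambda>\<sigma>. (v r + real \<sigma>) / real (l r)) ` {..<l r})"
  by (auto simp: num_params_def set_mset_sum atLeast0LessThan)

lemma set_mset_den_params: "set_mset (den_params l) = (\<lambda>t. real t / real (l 0)) ` {1..l 0}"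
  by (auto simp: den_params_def)

lemma count_den_params_le_1:
  assumes "0 < l 0"
  shows "count (den_params l) y \<le> 1"
proof -
  have "distinct (map (\<lambda>t. real t / real (l 0)) [1..<l 0 + 1])"
    using assms by (auto simp: distinct_map inj_on_def)
  then show ?thesis
    unfolding den_params_def distinct_count_atmost_1 by simp
qed

lemma coinciding_params:
  fixes p q :: nat
  assumes "0 \<le> x" and "x < 1" and "0 < p" and "0 < q"
  shows "(\<lambda>\<sigma>. (x + real \<sigma>) / real p) ` {..<p} \<inter> (\<lambda>t. real t / real q) ` {1..q}
    = (\<lambda>s. 1 - real s / real q) ` {s. 0 < s \<and> s < q \<and> x + real s * real p / real q \<in> \<int>}"
proof -
  have key: "(x + \<sigma>) / p = 1 - s / q \<longleftrightarrow> x + s * p / q = p - \<sigma>" for \<sigma> s :: real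
    using assms by (auto simp: field_simps)
  have den: "real t / real q = 1 - real (q - t) / real q" if "t \<le> q" for t
    using that assms by (simp add: of_nat_diff field_simps)
  show ?thesis
  proof (intro equalityI subsetI)
    fix y assume "y \<in> (\<lambda>\<sigma>. (x + real \<sigma>) / real p) ` {..<p} \<inter> (\<lambda>t. real t / real q) ` {1..q}"
    then obtain \<sigma> t where \<sigma>: "\<sigma> < p" and t: "1 \<le> t" "t \<le> q"
      and y: "y = (x + real \<sigma>) / real p" "y = real t / real q"
      by auto
    have "t \<noteq> q"
    proof
      assume "t = q"
      then have "x + real \<sigma> = real p" using y assms by (simp add: field_simps)
      with \<sigma> assms(2) show False by linarith
    qed
    then have "(x + real \<sigma>) / real p = 1 - real (q - t) / real q"
      using y den t by simp
    then have "x + real (q - t) * real p / real q = of_int (int p - int \<sigma>)"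
      using key \<sigma> by simp
    then have "x + real (q - t) * real p / real q \<in> \<int>"
      by (metis Ints_of_int)
    moreover have "y = 1 - real (q - t) / real q"
      using y den t by simp
    ultimately show "y \<in> (\<lambda>s. 1 - real s / real q) ` {s. 0 < s \<and> s < q \<and> x + real s * real p / real q \<in> \<int>}"
      using t \<open>t \<noteq> q\<close> by (intro image_eqI[where x="q - t"]) auto
  next
    fix y assume "y \<in> (\<lambda>s. 1 - real s / real q) ` {s. 0 < s \<and> s < q \<and> x + real s * real p / real q \<in> \<int>}"
    then obtain s k where s: "0 < s" "s < q" and k: "x + real s * real p / real q = of_int k"
      and y: "y = 1 - real s / real q"
      by (auto elim!: Ints_cases)
    have "0 < real s * real p / real q" and "real s * real p / real q < real p"
      using s assms by (auto simp: field_simps)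
    then have "0 < k" and "k \<le> int p"
      using k assms(1,2) by linarith+
    define \<sigma> where "\<sigma> = nat (int p - k)"
    have "\<sigma> < p" and "real \<sigma> = real p - of_int k"
      using \<open>0 < k\<close> \<open>k \<le> int p\<close> by (auto simp: \<sigma>_def)
    then have "y = (x + real \<sigma>) / real p"
      using key[of "real \<sigma>" "real s"] k y by simp
    with \<open>\<sigma> < p\<close> have "y \<in> (\<lambda>\<sigma>. (x + real \<sigma>) / real p) ` {..<p}"
      by blast
    moreover have "y \<in> (\<lambda>t. real t / real q) ` {1..q}"
      using den[of "q - s"] s y by (intro image_eqI[of _ _ "q - s"]) auto
    ultimately show "y \<in> (\<lambda>\<sigma>. (x + real \<sigma>) / real p) ` {..<p} \<inter> (\<lambda>t. real t / real q) ` {1..q}"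
      by blast
  qed
qed

(* If v are the coordinates of b with respect to a_1, ..., a_m, then shifted_coord l v s are
   those of b + s a_0, by the relation l_0 a_0 = sum_r l_r a_r. *)
definition shifted_coord :: "(nat \<Rightarrow> nat) \<Rightarrow> (nat \<Rightarrow> real) \<Rightarrow> nat \<Rightarrow> nat \<Rightarrow> real" where
  "shifted_coord l v s r = v r + real s * real (l r) / real (l 0)"

definition coincidence_shifts :: "nat \<Rightarrow> (nat \<Rightarrow> nat) \<Rightarrow> (nat \<Rightarrow> real) \<Rightarrow> nat set" where
  "coincidence_shifts m l v = {s. 0 < s \<and> s < l 0 \<and> (\<exists>r\<in>{1..m}. shifted_coord l v s r \<in> \<int>)}"

lemma set_mset_inter_num_den_params:
  assumes "\<forall>r\<in>{1..m}. 0 \<le> v r \<and> v r < 1" and "\<forall>j\<in>{0..m}. 0 < l j"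
  shows "set_mset (num_params m l v) \<inter> set_mset (den_params l)
    = (\<lambda>s. 1 - real s / real (l 0)) ` coincidence_shifts m l v"
proof -
  have "set_mset (num_params m l v) \<inter> set_mset (den_params l)
      = (\<Union>r\<in>{1..m}. (\<lambda>\<sigma>. (v r + real \<sigma>) / real (l r)) ` {..<l r} \<inter> (\<lambda>t. real t / real (l 0)) ` {1..l 0})"
    unfolding set_mset_num_params set_mset_den_params by blast
  also have "\<dots> = (\<Union>r\<in>{1..m}. (\<lambda>s. 1 - real s / real (l 0)) `
      {s. 0 < s \<and> s < l 0 \<and> v r + real s * real (l r) / real (l 0) \<in> \<int>})"
    using assms by (intro SUP_cong refl coinciding_params) auto
  also have "\<dots> = (\<lambda>s. 1 - real s / real (l 0)) ` coincidence_shifts m l v"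
    unfolding coincidence_shifts_def shifted_coord_def by blast
  finally show ?thesis .
qed

lemma inter_num_den_params:
  assumes "\<forall>r\<in>{1..m}. 0 \<le> v r \<and> v r < 1" and "\<forall>j\<in>{0..m}. 0 < l j"
  shows "num_params m l v \<inter># den_params l
      = mset_set ((\<lambda>s. 1 - real s / real (l 0)) ` coincidence_shifts m l v)"
    and "size (num_params m l v \<inter># den_params l) = card (coincidence_shifts m l v)"
proof -
  have l0: "0 < l 0"
    using assms(2) by auto
  show eq: "num_params m l v \<inter># den_params l
      = mset_set ((\<lambda>s. 1 - real s / real (l 0)) ` coincidence_shifts m l v)"
    using inter_mset_eq_mset_set[of "den_params l"] count_den_params_le_1[of l, OF l0]
      set_mset_inter_num_den_params[OF assms] by simp
  have "inj_on (\<lambda>s. 1 - real s / real (l 0)) (coincidence_shifts m l v)"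
    using l0 by (auto intro: inj_onI)
  moreover have "finite (coincidence_shifts m l v)"
    by (rule finite_subset[of _ "{..<l 0}"]) (auto simp: coincidence_shifts_def)
  ultimately show "size (num_params m l v \<inter># den_params l) = card (coincidence_shifts m l v)"
    unfolding eq by (simp add: card_image)
qed

locale circuit =
  fixes a :: "nat \<Rightarrow> real^'n" and m :: nat and l :: "nat \<Rightarrow> nat"
  assumes aint: "\<forall>j\<in>{0..m}. intv (a j)"
    and inj: "inj_on a {1..m}"
    and indep: "independent (a ` {1..m})"
    and lpos: "\<forall>j\<in>{0..m}. 0 < l j"
    and lgcd: "Gcd (l ` {0..m}) = 1"
    and rel: "real (l 0) *\<^sub>R a 0 = (\<Sum>j\<in>{1..m}. real (l j) *\<^sub>R a j)"
begin

lemma coeffs_unique: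
  "(\<Sum>r\<in>{1..m}. u r *\<^sub>R a r) = (\<Sum>r\<in>{1..m}. w r *\<^sub>R a r) \<Longrightarrow> r \<in> {1..m} \<Longrightarrow> u r = w r"
  using independent_image_coeffs_unique[OF finite_atLeastAtMost inj indep] .

lemma pcoord_unique:
  assumes "pcoord a m b u" and "pcoord a m b w" and "r \<in> {1..m}"
  shows "u r = w r"
proof (rule coeffs_unique[OF _ assms(3)])
  show "(\<Sum>r\<in>{1..m}. u r *\<^sub>R a r) = (\<Sum>r\<in>{1..m}. w r *\<^sub>R a r)"
    using assms(1,2) unfolding pcoord_def by simp
qed

lemma interior_pt_iff:
  assumes u: "pcoord a m b u"
  shows "interior_pt a m b \<longleftrightarrow> (\<forall>r\<in>{1..m}. 0 < u r)"
proof
  assume "interior_pt a m b"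
  then obtain w where "pcoord a m b w" and "\<forall>r\<in>{1..m}. 0 < w r"
    unfolding interior_pt_def by blast
  then show "\<forall>r\<in>{1..m}. 0 < u r"
    using pcoord_unique[OF u] by simp
qed (use u in \<open>auto simp: interior_pt_def\<close>)

lemma boundary_pt_iff:
  assumes u: "pcoord a m b u"
  shows "boundary_pt a m b \<longleftrightarrow> (\<exists>r\<in>{1..m}. u r = 0)"
proof
  assume "boundary_pt a m b"
  then obtain w where "pcoord a m b w" and "\<exists>r\<in>{1..m}. w r = 0"
    unfolding boundary_pt_def by blast
  then show "\<exists>r\<in>{1..m}. u r = 0"
    using pcoord_unique[OF u] by auto
qed (use u in \<open>auto simp: boundary_pt_def\<close>)

lemma interior_pt_iff_not_boundary_pt:
  assumes "b \<in> PA a m"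
  shows "interior_pt a m b \<longleftrightarrow> \<not> boundary_pt a m b"
proof -
  obtain u where u: "pcoord a m b u"
    using assms unfolding PA_def by blast
  then have "\<forall>r\<in>{1..m}. 0 \<le> u r"
    unfolding pcoord_def by blast
  then show ?thesis
    unfolding interior_pt_iff[OF u] boundary_pt_iff[OF u] by force
qed

lemma scaleR_a0: "x *\<^sub>R a 0 = (\<Sum>r\<in>{1..m}. (x * real (l r) / real (l 0)) *\<^sub>R a r)"
proof -
  have "x *\<^sub>R a 0 = (x / real (l 0)) *\<^sub>R (real (l 0) *\<^sub>R a 0)"
    using lpos by simp
  then show ?thesis
    unfolding rel scaleR_sum_right by simp
qed

lemma dvd_if_multiple_a0_in_lat:
  assumes "of_int k *\<^sub>R a 0 \<in> lat a {1..m}"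
  shows "int (l 0) dvd k"
proof -
  obtain e where "of_int k *\<^sub>R a 0 = (\<Sum>r\<in>{1..m}. of_int (e r) *\<^sub>R a r)"
    using assms unfolding lat_def by blast
  then have eq: "(\<Sum>r\<in>{1..m}. (of_int k * real (l r) / real (l 0)) *\<^sub>R a r)
      = (\<Sum>r\<in>{1..m}. of_int (e r) *\<^sub>R a r)"
    unfolding scaleR_a0 .
  have "int (l 0) dvd k * int (l j)" if "j \<in> {0..m}" for j
  proof (cases "j = 0")
    case False
    with that have "of_int k * real (l j) / real (l 0) = of_int (e j)"
      by (intro coeffs_unique[OF eq]) auto
    then have "of_int (k * int (l j)) = (of_int (e j * int (l 0)) :: real)"
      using lpos by (simp add: field_simps)
    then show ?thesis
      unfolding of_int_eq_iff by simp
  qed simp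
  then show ?thesis
    using lgcd by (rule int_dvd_if_dvd_mult_Gcd_eq_1)
qed

definition orbit_pt :: "(nat \<Rightarrow> real) \<Rightarrow> nat \<Rightarrow> real^'n" where
  "orbit_pt v s = (\<Sum>r\<in>{1..m}. frac (shifted_coord l v s r) *\<^sub>R a r)"

lemma pcoord_orbit_pt: "pcoord a m (orbit_pt v s) (\<lambda>r. frac (shifted_coord l v s r))"
  unfolding pcoord_def orbit_pt_def by (simp add: frac_lt_1)

lemma boundary_pt_orbit_pt_iff:
  "boundary_pt a m (orbit_pt v s) \<longleftrightarrow> (\<exists>r\<in>{1..m}. shifted_coord l v s r \<in> \<int>)"
  unfolding boundary_pt_iff[OF pcoord_orbit_pt] by simp

lemma orbit_pt_congruent:
  assumes "pcoord a m b v"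
  shows "b + real s *\<^sub>R a 0 - orbit_pt v s = (\<Sum>r\<in>{1..m}. of_int \<lfloor>shifted_coord l v s r\<rfloor> *\<^sub>R a r)"
proof -
  have "b + real s *\<^sub>R a 0 = (\<Sum>r\<in>{1..m}. shifted_coord l v s r *\<^sub>R a r)"
    using assms unfolding pcoord_def scaleR_a0
    by (simp add: shifted_coord_def sum.distrib scaleR_add_left)
  then show ?thesis
    unfolding orbit_pt_def frac_def by (simp add: sum_subtractf scaleR_diff_left)
qed

lemma orbit_pt_congruent_lat:
  assumes "pcoord a m b v"
  shows "b + real s *\<^sub>R a 0 - orbit_pt v s \<in> lat a {1..m}"
  unfolding orbit_pt_congruent[OF assms] lat_def
  by (intro CollectI exI[where x="\<lambda>r. \<lfloor>shifted_coord l v s r\<rfloor>"] refl)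

lemma orbit_pt_0:
  assumes "pcoord a m b v"
  shows "orbit_pt v 0 = b"
proof -
  have "orbit_pt v 0 = (\<Sum>r\<in>{1..m}. v r *\<^sub>R a r)"
    unfolding orbit_pt_def
    by (rule sum.cong) (use assms in \<open>simp_all add: pcoord_def shifted_coord_def frac_eq\<close>)
  then show ?thesis
    using assms unfolding pcoord_def by simp
qed

lemma s0_orbit_pt:
  assumes v: "pcoord a m b v" and s: "s < l 0"
  shows "s0 a m (l 0) b (orbit_pt v s) = s"
  unfolding s0_def
proof (rule the_equality)
  show "s < l 0 \<and> b + real s *\<^sub>R a 0 - orbit_pt v s \<in> lat a {1..m}"
    using s orbit_pt_congruent_lat[OF v] by blast
  fix s' assume s': "s' < l 0 \<and> b + real s' *\<^sub>R a 0 - orbit_pt v s \<in> lat a {1..m}"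
  have "of_int (int s' - int s) *\<^sub>R a 0
      = (b + real s' *\<^sub>R a 0 - orbit_pt v s) - (b + real s *\<^sub>R a 0 - orbit_pt v s)"
    by (simp add: algebra_simps)
  also have "\<dots> \<in> lat a {1..m}"
    using s' orbit_pt_congruent_lat[OF v] by (blast intro: lat_diff)
  finally have "int (l 0) dvd int s' - int s"
    by (rule dvd_if_multiple_a0_in_lat)
  moreover have "\<bar>int s' - int s\<bar> < int (l 0)"
    using s s' by auto
  ultimately have "int s' - int s = 0"
    using dvd_imp_le_int[of "int s' - int s" "int (l 0)"] by linarith
  then show "s' = s"
    by simp
qed

lemma inj_on_orbit_pt:
  assumes "pcoord a m b v"
  shows "inj_on (orbit_pt v) {..<l 0}"
  by (rule inj_on_inverseI[where g="s0 a m (l 0) b"]) (simp add: s0_orbit_pt[OF assms])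

lemma eq_orbit_pt_if_congruent:
  assumes v: "pcoord a m b v" and u: "pcoord a m b' u"
    and congr: "b' - b - of_int k *\<^sub>R a 0 \<in> lat a {1..m}"
  shows "b' = orbit_pt v (nat (k mod int (l 0)))"
proof -
  define s where "s = nat (k mod int (l 0))"
  define q where "q = k div int (l 0)"
  have k: "k = int s + q * int (l 0)"
    using lpos by (simp add: s_def q_def)
  obtain e where e: "b' - b - of_int k *\<^sub>R a 0 = (\<Sum>r\<in>{1..m}. of_int (e r) *\<^sub>R a r)"
    using congr unfolding lat_def by blast
  have "(\<Sum>r\<in>{1..m}. u r *\<^sub>R a r)
      = (\<Sum>r\<in>{1..m}. (v r + of_int k * real (l r) / real (l 0) + of_int (e r)) *\<^sub>R a r)"
  proof -
    have "b' = b + of_int k *\<^sub>R a 0 + (\<Sum>r\<in>{1..m}. of_int (e r) *\<^sub>R a r)"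
      using e by (simp add: algebra_simps)
    then show ?thesis
      using u v unfolding pcoord_def scaleR_a0[of "of_int k"]
      by (simp add: sum.distrib scaleR_add_left)
  qed
  then have u_eq: "u r = v r + of_int k * real (l r) / real (l 0) + of_int (e r)" if "r \<in> {1..m}" for r
    using that by (rule coeffs_unique)
  have k_split: "of_int k * real (l r) / real (l 0) = real s * real (l r) / real (l 0) + of_int (q * int (l r))" for r
    using lpos unfolding k by (simp add: field_simps)
  have shifted_minus_u: "shifted_coord l v s r - u r = of_int (- q * int (l r) - e r)" if "r \<in> {1..m}" for r
    using u_eq[OF that] k_split[of r] unfolding shifted_coord_def by (simp only: of_int_diff of_int_mult of_int_minus)
  have "frac (shifted_coord l v s r) = u r" if "r \<in> {1..m}" for r
  proof -
    have "shifted_coord l v s r - u r \<in> \<int>"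
      unfolding shifted_minus_u[OF that] by (rule Ints_of_int)
    moreover have "0 \<le> u r" and "u r < 1"
      using that u unfolding pcoord_def by blast+
    ultimately show ?thesis
      unfolding frac_unique_iff by (intro conjI)
  qed
  then have "orbit_pt v s = (\<Sum>r\<in>{1..m}. u r *\<^sub>R a r)"
    unfolding orbit_pt_def by (intro sum.cong) simp_all
  then show ?thesis
    using u unfolding pcoord_def s_def by simp
qed

context
  fixes c b :: "real^'n" and v :: "nat \<Rightarrow> real"
  assumes b: "b \<in> Bk a m c" and v: "pcoord a m b v"
begin

lemma orbit_pt_in_Bk: "orbit_pt v s \<in> Bk a m c"
proof -
  have b_coset: "b - c \<in> lat a {0..m}" and b_VZ: "b \<in> VZ a m"
    using b unfolding Bk_def Bset_def coset_ZAplus_def by auto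
  then obtain k where "b - c - of_int k *\<^sub>R a 0 \<in> lat a {1..m}"
    unfolding lat_atLeastAtMost_0 by blast
  then have "(b - c - of_int k *\<^sub>R a 0) - (b + real s *\<^sub>R a 0 - orbit_pt v s) \<in> lat a {1..m}"
    using orbit_pt_congruent_lat[OF v] by (rule lat_diff)
  also have "(b - c - of_int k *\<^sub>R a 0) - (b + real s *\<^sub>R a 0 - orbit_pt v s)
      = orbit_pt v s - c - of_int (k + int s) *\<^sub>R a 0"
    by (simp add: algebra_simps)
  finally have coset: "orbit_pt v s - c \<in> lat a {0..m}"
    unfolding lat_atLeastAtMost_0 by blast
  have "intv (orbit_pt v s - b)"
    using aint lat_diff[OF coset b_coset] by (intro intv_lat[of "{0..m}"]) auto
  moreover have "intv b"
    using b_VZ unfolding VZ_def by blast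
  ultimately have "intv (orbit_pt v s)"
    unfolding intv_def by (metis Ints_add diff_add_cancel vector_add_component)
  moreover have "orbit_pt v s \<in> span (a ` {1..m})"
    unfolding orbit_pt_def by (intro span_sum span_scale span_base) auto
  ultimately show ?thesis
    using coset pcoord_orbit_pt
    unfolding Bk_def Bset_def coset_ZAplus_def VZ_def PA_def by blast
qed

lemma Bk_eq_image_orbit_pt: "Bk a m c = orbit_pt v ` {..<l 0}"
proof
  show "orbit_pt v ` {..<l 0} \<subseteq> Bk a m c"
    using orbit_pt_in_Bk by blast
  show "Bk a m c \<subseteq> orbit_pt v ` {..<l 0}"
  proof
    fix b' assume b': "b' \<in> Bk a m c"
    then obtain u where u: "pcoord a m b' u"
      unfolding Bk_def Bset_def PA_def by blast
    have "(b' - c) - (b - c) \<in> lat a {0..m}"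
      using b b' unfolding Bk_def coset_ZAplus_def by (blast intro: lat_diff)
    then obtain k where "b' - b - of_int k *\<^sub>R a 0 \<in> lat a {1..m}"
      unfolding lat_atLeastAtMost_0 by auto
    then have "b' = orbit_pt v (nat (k mod int (l 0)))"
      by (rule eq_orbit_pt_if_congruent[OF v u])
    moreover have "nat (k mod int (l 0)) < l 0"
      using lpos by (simp add: nat_less_iff)
    ultimately show "b' \<in> orbit_pt v ` {..<l 0}"
      by blast
  qed
qed

lemma finite_Bk: "finite (Bk a m c)"
  unfolding Bk_eq_image_orbit_pt by simp

lemma card_Bk: "card (Bk a m c) = l 0"
  unfolding Bk_eq_image_orbit_pt using inj_on_orbit_pt[OF v] by (simp add: card_image)

lemma card_boundary_pts_Bk: "card {b' \<in> Bk a m c. boundary_pt a m b'} = l 0 - Rk a m c"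
proof -
  have "{b' \<in> Bk a m c. boundary_pt a m b'} = Bk a m c - {b' \<in> Bk a m c. interior_pt a m b'}"
    using interior_pt_iff_not_boundary_pt unfolding Bk_def Bset_def by blast
  then show ?thesis
    unfolding Rk_def using finite_Bk card_Bk by (simp add: card_Diff_subset)
qed

lemma other_boundary_pts_Bk:
  "{b' \<in> Bk a m c. boundary_pt a m b' \<and> b' \<noteq> b} = orbit_pt v ` coincidence_shifts m l v"
proof -
  have "orbit_pt v s \<noteq> b \<longleftrightarrow> s \<noteq> 0" if "s < l 0" for s
    using inj_on_orbit_pt[OF v] that lpos orbit_pt_0[OF v] by (auto dest: inj_onD)
  then show ?thesis
    unfolding Bk_eq_image_orbit_pt coincidence_shifts_def by (auto simp: boundary_pt_orbit_pt_iff; fastforce)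
qed

lemma inter_params_eq_other_boundary_pts:
  defines "BD' \<equiv> {b' \<in> Bk a m c. boundary_pt a m b' \<and> b' \<noteq> b}"
  shows "num_params m l v \<inter># den_params l
      = mset_set ((\<lambda>b'. 1 - real (s0 a m (l 0) b b') / real (l 0)) ` BD')"
    and "size (num_params m l v \<inter># den_params l) = card BD'"
proof -
  have v_bounds: "\<forall>r\<in>{1..m}. 0 \<le> v r \<and> v r < 1"
    using v unfolding pcoord_def by blast
  have shifts: "coincidence_shifts m l v \<subseteq> {..<l 0}"
    unfolding coincidence_shifts_def by auto
  have "(\<lambda>b'. 1 - real (s0 a m (l 0) b b') / real (l 0)) ` BD'
      = (\<lambda>s. 1 - real s / real (l 0)) ` coincidence_shifts m l v"
    unfolding BD'_def other_boundary_pts_Bk image_image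
    using shifts s0_orbit_pt[OF v] by (intro image_cong) auto
  moreover have "card BD' = card (coincidence_shifts m l v)"
    unfolding BD'_def other_boundary_pts_Bk
    using inj_on_subset[OF inj_on_orbit_pt[OF v] shifts] by (rule card_image)
  ultimately show "num_params m l v \<inter># den_params l
      = mset_set ((\<lambda>b'. 1 - real (s0 a m (l 0) b b') / real (l 0)) ` BD')"
    and "size (num_params m l v \<inter># den_params l) = card BD'"
    using inter_num_den_params[OF v_bounds lpos] by simp_all
qed

end

end

theorem proposition6p14:
  fixes a :: "nat \<Rightarrow> real^'n" and m :: nat and l :: "nat \<Rightarrow> nat"
    and c bi :: "real^'n" and v :: "nat \<Rightarrow> real"
  assumes aint: "\<forall>j\<in>{0..m}. intv (a j)"
    and inj: "inj_on a {1..m}"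
    and indep: "independent (a ` {1..m})"
    and lpos: "\<forall>j\<in>{0..m}. 0 < l j"
    and lgcd: "Gcd (l ` {0..m}) = 1"
    and rel: "real (l 0) *\<^sub>R a 0 = (\<Sum>j\<in>{1..m}. real (l j) *\<^sub>R a j)"
    and lsum: "l 0 = (\<Sum>j\<in>{1..m}. l j)"
    and c: "c \<in> VZ a m"
    and bi: "bi \<in> Bk a m c"
    and v: "pcoord a m bi v"
  shows "(interior_pt a m bi \<longrightarrow>
            num_params m l v \<inter># den_params l
              = mset_set ((\<lambda>b. 1 - real (s0 a m (l 0) bi b) / real (l 0)) `
                          {b \<in> Bk a m c. boundary_pt a m b})
          \<and> size (num_params m l v \<inter># den_params l) = l 0 - Rk a m c)
       \<and> (boundary_pt a m bi \<longrightarrow>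
            num_params m l v \<inter># den_params l
              = mset_set ((\<lambda>b. 1 - real (s0 a m (l 0) bi b) / real (l 0)) `
                          {b \<in> Bk a m c. boundary_pt a m b \<and> b \<noteq> bi})
          \<and> size (num_params m l v \<inter># den_params l) = l 0 - Rk a m c - 1)"
proof -
  interpret circuit a m l
    using aint inj indep lpos lgcd rel by unfold_locales
  let ?BD = "{b \<in> Bk a m c. boundary_pt a m b}"
  have BD_finite: "finite ?BD" and BD_card: "card ?BD = l 0 - Rk a m c"
    using finite_Bk[OF bi v] card_boundary_pts_Bk[OF bi v] by simp_all
  note inter = inter_params_eq_other_boundary_pts[OF bi v]
  have "bi \<in> PA a m"
    using v unfolding PA_def by blast
  then have bi_cases: "interior_pt a m bi \<longleftrightarrow> \<not> boundary_pt a m bi"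
    by (rule interior_pt_iff_not_boundary_pt)
  show ?thesis
  proof (intro conjI impI)
    assume "interior_pt a m bi"
    then have "{b \<in> Bk a m c. boundary_pt a m b \<and> b \<noteq> bi} = ?BD"
      using bi_cases by blast
    with inter BD_card show "num_params m l v \<inter># den_params l
        = mset_set ((\<lambda>b. 1 - real (s0 a m (l 0) bi b) / real (l 0)) ` ?BD)"
      and "size (num_params m l v \<inter># den_params l) = l 0 - Rk a m c"
      by simp_all
  next
    assume "boundary_pt a m bi"
    then have "bi \<in> ?BD" and "{b \<in> Bk a m c. boundary_pt a m b \<and> b \<noteq> bi} = ?BD - {bi}"
      using bi by blast+
    with inter BD_finite BD_card
    show "num_params m l v \<inter># den_params l
        = mset_set ((\<lambda>b. 1 - real (s0 a m (l 0) bi b) / real (l 0)) `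
                    {b \<in> Bk a m c. boundary_pt a m b \<and> b \<noteq> bi})"
      and "size (num_params m l v \<inter># den_params l) = l 0 - Rk a m c - 1"
      by simp_all
  qed
qed

end
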